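(* $\mathrm{GL}_3(\mathbb{F}_5)$ contains exactly one conjugacy class of subgroups isomorphic to $A_5\times C_2$. *)

theory Defs
  imports "HOL-Analysis.Analysis" "HOL-Library.Numeral_Type" "HOL-Algebra.Algebra"
begin

text \<open>The finite field F_5 is the numeral type 5 (integers mod 5).
  GL_3(F_5): invertible 3x3 matrices over F_5 under matrix multiplication.\<close>

definition GL3F5 :: "(5^3^3) monoid" where
  "GL3F5 = \<lparr>carrier = {A. invertible A}, mult = (**), one = mat 1\<rparr>"

definition A5xC2 :: "((nat \<Rightarrow> nat) \<times> int) monoid" where
  "A5xC2 = DirProd (alt_group 5) (integer_mod_group 2)"

definition conj_subset :: "('a, 'b) monoid_scheme \<Rightarrow> 'a \<Rightarrow> 'a set \<Rightarrow> 'a set" where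
  "conj_subset G g H = (\<lambda>h. g \<otimes>\<^bsub>G\<^esub> h \<otimes>\<^bsub>G\<^esub> inv\<^bsub>G\<^esub> g) ` H"

end

theory Submission
  imports Defs
begin

text \<open>The Klein four-group
  \<open>{1, (12)(34), (13)(24), (14)(23)}\<close> of \<open>A\<^sub>5\<close> acts by commuting involutions, so (as \<open>2 \<noteq> 0\<close>)
  \<open>F\<^sub>5\<^sup>3\<close> splits into joint eigenspaces; the 3-cycle \<open>(123)\<close> permutes the three nontrivial
  characters cyclically, so each occurs on a line, and in a suitable basis the four-group is
  diagonal and \<open>(123)\<close> is the cyclic permutation matrix. In this basis the image of \<open>(12)(45)\<close>
  is a circulant involution, and only one of them gives the required element orders; the central
  involution commutes with everything, hence is \<open>-1\<close>. These elements generate \<open>A\<^sub>5 \<times> C\<^sub>2\<close>, so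
  any two embeddings are conjugate. One embedding exists: \<open>A\<^sub>5\<close> acts on the 3-dimensional heart of
  its permutation module over \<open>F\<^sub>5\<close>, and \<open>C\<^sub>2\<close> acts by \<open>-1\<close>.\<close>

section \<open>Group theory\<close>

lemma (in group) prime_dvd_card_subgroup:
  assumes "subgroup K G" "finite K" "Factorial_Ring.prime p" "x \<in> K" "x [^] p = \<one>" "x \<noteq> \<one>"
  shows "p dvd card K"
proof -
  interpret K: group "G\<lparr>carrier := K\<rparr>" by (rule subgroup.subgroup_is_group[OF assms(1) is_group])
  have "x [^]\<^bsub>G\<lparr>carrier := K\<rparr>\<^esub> p = \<one>\<^bsub>G\<lparr>carrier := K\<rparr>\<^esub>"
    using assms(5) nat_pow_consistent[of x p K] by simp
  then have "K.ord x dvd p" using K.pow_eq_id assms(4) by simp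
  moreover have "K.ord x \<noteq> 1" using K.ord_eq_1 assms(4,6) by simp
  ultimately have "K.ord x = p" using assms(3) unfolding prime_nat_iff by blast
  then show ?thesis using K.ord_dvd_group_order[of x] assms(4) by (simp add: order_def)
qed

lemma (in group) card_subgroup_dvd_card_subgroup:
  assumes "subgroup H G" "subgroup K G" "H \<subseteq> K" "finite K"
  shows "card H dvd card K"
proof -
  interpret K: group "G\<lparr>carrier := K\<rparr>" by (rule subgroup.subgroup_is_group[OF assms(2) is_group])
  have "card (rcosets\<^bsub>G\<lparr>carrier := K\<rparr>\<^esub> H) * card H = card K"
    using K.lagrange subgroup_incl[OF assms(1-3)] assms(4) by (simp add: order_def)
  then show ?thesis by (metis dvd_triv_right)
qed

lemma hom_equalizer_subgroup:
  assumes "group G" "group H" "f \<in> hom G H" "g \<in> hom G H"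
  shows "subgroup {x \<in> carrier G. f x = g x} G"
proof -
  interpret f: group_hom G H f using assms by (simp add: group_hom_def group_hom_axioms_def)
  interpret g: group_hom G H g using assms by (simp add: group_hom_def group_hom_axioms_def)
  show ?thesis
    by (rule f.G.subgroupI) (auto simp: f.hom_inv g.hom_inv f.hom_mult g.hom_mult)
qed

lemma hom_conjugate:
  assumes "group H" "f \<in> hom G H" "h \<in> carrier H"
  shows "(\<lambda>x. inv\<^bsub>H\<^esub> h \<otimes>\<^bsub>H\<^esub> f x \<otimes>\<^bsub>H\<^esub> h) \<in> hom G H"
proof (rule homI)
  interpret H: group H by (rule assms(1))
  have cancel: "h \<otimes>\<^bsub>H\<^esub> (inv\<^bsub>H\<^esub> h \<otimes>\<^bsub>H\<^esub> z) = z" if "z \<in> carrier H" for z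
    using that assms(3) by (simp add: H.m_assoc[symmetric])
  show "inv\<^bsub>H\<^esub> h \<otimes>\<^bsub>H\<^esub> f x \<otimes>\<^bsub>H\<^esub> h \<in> carrier H" if "x \<in> carrier G" for x
    using that assms(3) hom_in_carrier[OF assms(2)] by simp
  fix x y assume "x \<in> carrier G" "y \<in> carrier G"
  then have fx: "f x \<in> carrier H" and fy: "f y \<in> carrier H"
    and fxy: "f (x \<otimes>\<^bsub>G\<^esub> y) = f x \<otimes>\<^bsub>H\<^esub> f y"
    using assms(2) by (auto simp: hom_mult hom_in_carrier)
  show "inv\<^bsub>H\<^esub> h \<otimes>\<^bsub>H\<^esub> f (x \<otimes>\<^bsub>G\<^esub> y) \<otimes>\<^bsub>H\<^esub> h
      = (inv\<^bsub>H\<^esub> h \<otimes>\<^bsub>H\<^esub> f x \<otimes>\<^bsub>H\<^esub> h) \<otimes>\<^bsub>H\<^esub> (inv\<^bsub>H\<^esub> h \<otimes>\<^bsub>H\<^esub> f y \<otimes>\<^bsub>H\<^esub> h)"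
    using fx fy assms(3) by (simp add: fxy H.m_assoc cancel)
qed

section \<open>Matrix algebra and the field with five elements\<close>

lemma matrix_add_rdistrib: "((A::'a::semiring_1^'n^'m) + B) ** C = A ** C + B ** C"
  by (simp add: matrix_matrix_mult_def vec_eq_iff sum.distrib distrib_right)

lemma matrix_diff_ldistrib: "(A::'a::ring_1^'n^'m) ** (B - C) = A ** B - A ** C"
  by (simp add: matrix_matrix_mult_def vec_eq_iff sum_subtractf right_diff_distrib)

lemma matrix_diff_rdistrib: "((A::'a::ring_1^'n^'m) - B) ** C = A ** C - B ** C"
  by (simp add: matrix_matrix_mult_def vec_eq_iff sum_subtractf left_diff_distrib)

lemma matrix_neg_left: "(- (A::'a::ring_1^'n^'m)) ** B = - (A ** B)"
  by (simp add: matrix_matrix_mult_def vec_eq_iff sum_negf)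

lemma matrix_neg_right: "(A::'a::ring_1^'n^'m) ** (- B) = - (A ** B)"
  by (simp add: matrix_matrix_mult_def vec_eq_iff sum_negf)

lemmas matrix_ring_distribs = matrix_add_ldistrib matrix_add_rdistrib matrix_diff_ldistrib
  matrix_diff_rdistrib matrix_neg_left matrix_neg_right

lemma mat_mult_mat: "(mat u :: 'a::semiring_1^'n^'n) ** mat v = mat (u * v)"
proof -
  have "(mat u ** mat v) $ i $ j = (mat (u * v) :: 'a^'n^'n) $ i $ j" for i j
    by (simp add: matrix_matrix_mult_def mat_def mult_delta_left mult_delta_right)
  then show ?thesis by (simp add: vec_eq_iff)
qed

lemma matrix_mul_mat_commute: "(M::'a::comm_semiring_1^'n^'n) ** mat u = mat u ** M"
proof -
  have "(M ** mat u) $ i $ j = (mat u ** M) $ i $ j" for i j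
    by (simp add: matrix_matrix_mult_def mat_def mult_delta_left mult_delta_right mult.commute)
  then show ?thesis by (simp add: vec_eq_iff)
qed

lemma matrix_mul_mat_left_commute: "(M::'a::comm_semiring_1^'n^'n) ** (mat u ** N) = mat u ** (M ** N)"
  by (metis matrix_mul_assoc matrix_mul_mat_commute)

lemma det_mat: "det (mat d :: 'a::comm_ring_1^'n^'n) = d ^ CARD('n)"
  by (simp add: det_diagonal mat_def)

definition adjugate3 :: "'a::comm_ring_1^3^3 \<Rightarrow> 'a^3^3" where
  "adjugate3 A = vector [
     vector [A$2$2*A$3$3 - A$2$3*A$3$2, A$1$3*A$3$2 - A$1$2*A$3$3, A$1$2*A$2$3 - A$1$3*A$2$2],
     vector [A$2$3*A$3$1 - A$2$1*A$3$3, A$1$1*A$3$3 - A$1$3*A$3$1, A$1$3*A$2$1 - A$1$1*A$2$3],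
     vector [A$2$1*A$3$2 - A$2$2*A$3$1, A$1$2*A$3$1 - A$1$1*A$3$2, A$1$1*A$2$2 - A$1$2*A$2$1]]"

lemma matrix_mul_adjugate3: "A ** adjugate3 A = mat (det A)"
  unfolding vec_eq_iff forall_3 adjugate3_def matrix_matrix_mult_def
  by (simp add: sum_3 det_3 mat_def vector_3 algebra_simps)

lemma adjugate3_mul_matrix: "adjugate3 A ** A = mat (det A)"
  unfolding vec_eq_iff forall_3 adjugate3_def matrix_matrix_mult_def
  by (simp add: sum_3 det_3 mat_def vector_3 algebra_simps)

lemma invertible_if_det_unit3:
  fixes A :: "'a::comm_ring_1^3^3"
  assumes "u * det A = 1"
  shows "invertible A"
proof -
  have "A ** (mat u ** adjugate3 A) = mat 1"
    by (simp add: matrix_mul_mat_left_commute matrix_mul_adjugate3 mat_mult_mat assms)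
  moreover have "(mat u ** adjugate3 A) ** A = mat 1"
    by (simp add: matrix_mul_assoc[symmetric] adjugate3_mul_matrix mat_mult_mat assms)
  ultimately show ?thesis unfolding invertible_def by blast
qed

definition mat3 :: "'a::zero \<Rightarrow> 'a \<Rightarrow> 'a \<Rightarrow> 'a \<Rightarrow> 'a \<Rightarrow> 'a \<Rightarrow> 'a \<Rightarrow> 'a \<Rightarrow> 'a \<Rightarrow> 'a^3^3" where
  "mat3 a b c d e f g h i = vector [vector [a,b,c], vector [d,e,f], vector [g,h,i]]"

lemma mat3_nth [simp]:
  "mat3 a b c d e f g h i $ 1 $ 1 = a" "mat3 a b c d e f g h i $ 1 $ 2 = b" "mat3 a b c d e f g h i $ 1 $ 3 = c"
  "mat3 a b c d e f g h i $ 2 $ 1 = d" "mat3 a b c d e f g h i $ 2 $ 2 = e" "mat3 a b c d e f g h i $ 2 $ 3 = f"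
  "mat3 a b c d e f g h i $ 3 $ 1 = g" "mat3 a b c d e f g h i $ 3 $ 2 = h" "mat3 a b c d e f g h i $ 3 $ 3 = i"
  by (simp_all add: mat3_def)

lemma mat3_cases:
  obtains a b c d e f g h i where "(A::'a::zero^3^3) = mat3 a b c d e f g h i"
proof
  show "A = mat3 (A$1$1) (A$1$2) (A$1$3) (A$2$1) (A$2$2) (A$2$3) (A$3$1) (A$3$2) (A$3$3)"
    unfolding vec_eq_iff forall_3 by simp
qed

lemma mat3_mult: "mat3 a b c d e f g h i ** mat3 a' b' c' d' e' f' g' h' i' =
  mat3 (a * a' + b * d' + c * g') (a * b' + b * e' + c * h') (a * c' + b * f' + c * i')
       (d * a' + e * d' + f * g') (d * b' + e * e' + f * h') (d * c' + e * f' + f * i')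
       (g * a' + h * d' + i * g') (g * b' + h * e' + i * h') (g * c' + h * f' + i * i')"
  unfolding vec_eq_iff forall_3 matrix_matrix_mult_def by (simp add: sum_3)

lemma mat3_eq_iff: "mat3 a b c d e f g h i = mat3 a' b' c' d' e' f' g' h' i' \<longleftrightarrow>
  a = a' \<and> b = b' \<and> c = c' \<and> d = d' \<and> e = e' \<and> f = f' \<and> g = g' \<and> h = h' \<and> i = i'"
  unfolding vec_eq_iff forall_3 by simp

lemma mat_eq_mat3: "(mat x :: 'a::zero^3^3) = mat3 x 0 0 0 x 0 0 0 x"
  unfolding vec_eq_iff forall_3 by (simp add: mat_def)

lemma mult_columns: "(A::'a::semiring_1^3^3) ** (\<chi> r k. V k $ r $ j) = (\<chi> r k. (A ** V k) $ r $ j)"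
  by (simp add: matrix_matrix_mult_def vec_eq_iff)

lemma rows_mult_columns:
  "((\<chi> k r. W k $ i $ r) :: 'a::semiring_1^3^3) ** (\<chi> r k. V k $ r $ j) = (\<chi> k l. (W k ** V l) $ i $ j)"
  by (simp add: matrix_matrix_mult_def vec_eq_iff)

lemma F5_cases: "(x::5) = 0 \<or> x = 1 \<or> x = 2 \<or> x = 3 \<or> x = 4"
proof (induct x)
  case (of_int z)
  then have "z = 0 \<or> z = 1 \<or> z = 2 \<or> z = 3 \<or> z = 4" by auto
  then show ?case by auto
qed

lemma F5_five_eq_0: "(5::5) = 0"
  by simp

lemma F5_double_eq_0: "(x::5) + x = 0 \<Longrightarrow> x = 0"
  using F5_cases[of x] by auto

lemma F5_four_times_ne_0: "(x::5) \<noteq> 0 \<Longrightarrow> x + x + x + x \<noteq> 0"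
  using F5_cases[of x] by auto

lemma F5_cube_ne_0: "(x::5) \<noteq> 0 \<Longrightarrow> x * x * x \<noteq> 0"
  using F5_cases[of x] by auto

lemma F5_unit: "(x::5) \<noteq> 0 \<Longrightarrow> \<exists>y. y * x = 1"
  using F5_cases[of x] by (auto intro: exI[of _ 1] exI[of _ 2] exI[of _ 3] exI[of _ 4])

lemma F5_times_4_eq_self_iff:
  "(x::5) * 4 = x \<longleftrightarrow> x = 0" "4 * x = x \<longleftrightarrow> x = 0" "x = x * 4 \<longleftrightarrow> x = 0" "x = 4 * x \<longleftrightarrow> x = 0"
  using F5_cases[of x] by auto

lemma matrix_double_eq_0: "(M::5^3^3) + M = 0 \<Longrightarrow> M = 0"
  by (simp add: vec_eq_iff F5_double_eq_0)

lemma invertible_if_det_ne_0: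
  fixes A :: "5^3^3"
  assumes "det A \<noteq> 0"
  shows "invertible A"
  using F5_unit[OF assms] invertible_if_det_unit3 by blast

section \<open>Normal form of a Klein four-group normalised by an element of order three\<close>

definition std_A1 :: "5^3^3" where "std_A1 = mat3 1 0 0 0 4 0 0 0 4"
definition std_A2 :: "5^3^3" where "std_A2 = mat3 4 0 0 0 4 0 0 0 1"
definition std_C :: "5^3^3" where "std_C = mat3 0 0 1 1 0 0 0 1 0"
definition std_S :: "5^3^3" where "std_S = mat3 2 1 1 1 1 2 1 2 1"

locale klein_triple =
  fixes A1 A2 C :: "5^3^3"
  assumes A1_sq: "A1 ** A1 = mat 1" and A2_sq: "A2 ** A2 = mat 1"
    and A1_A2_commute: "A1 ** A2 = A2 ** A1"
    and C_A1: "C ** A1 = A1 ** A2 ** C" and C_A2: "C ** A2 = A1 ** C"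
    and C_cube: "C ** C ** C = mat 1" and A1_ne_1: "A1 \<noteq> mat 1"
begin

lemma A1_A1_mult: "A1 ** (A1 ** M) = M"
  by (metis A1_sq matrix_mul_assoc matrix_mul_lid)

lemma A2_A2_mult: "A2 ** (A2 ** M) = M"
  by (metis A2_sq matrix_mul_assoc matrix_mul_lid)

lemma A2_A1_mult: "A2 ** (A1 ** M) = A1 ** (A2 ** M)"
  by (metis A1_A2_commute matrix_mul_assoc)

lemma C_A1_mult: "C ** (A1 ** M) = A1 ** (A2 ** (C ** M))"
  by (metis C_A1 matrix_mul_assoc)

lemma C_A2_mult: "C ** (A2 ** M) = A1 ** (C ** M)"
  by (metis C_A2 matrix_mul_assoc)

lemma C_C_C_mult: "C ** (C ** (C ** M)) = M"
  by (metis C_cube matrix_mul_assoc matrix_mul_lid)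

lemma A1_C_mult: "A1 ** (C ** M) = C ** (A2 ** M)"
  by (metis C_A2 matrix_mul_assoc)

lemma A2_C_mult: "A2 ** (C ** M) = C ** (A1 ** (A2 ** M))"
  by (metis A1_A1_mult A2_A1_mult C_A1_mult C_A2_mult)

text \<open>Four times the projections onto the joint eigenspaces of \<open>(A1, A2)\<close> with eigenvalues
  \<open>(1, -1)\<close>, \<open>(-1, -1)\<close> and \<open>(-1, 1)\<close>; conjugation by \<open>C\<close> permutes them cyclically.\<close>

definition proj_pm where "proj_pm = mat 1 + A1 - A2 - A1 ** A2"
definition proj_mm where "proj_mm = mat 1 - A1 - A2 + A1 ** A2"
definition proj_mp where "proj_mp = mat 1 - A1 + A2 - A1 ** A2"

lemma A1_proj_pm: "A1 ** proj_pm = proj_pm"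
  unfolding proj_pm_def by (simp add: matrix_ring_distribs A1_sq A1_A1_mult algebra_simps)

lemma A2_proj_pm: "A2 ** proj_pm = - proj_pm"
  unfolding proj_pm_def
  by (simp add: matrix_ring_distribs A2_sq A2_A1_mult A2_A2_mult A1_A2_commute algebra_simps)

lemma proj_pm_A1: "proj_pm ** A1 = proj_pm"
  unfolding proj_pm_def
  by (simp add: matrix_ring_distribs A1_sq matrix_mul_assoc[symmetric] A1_A2_commute A1_A1_mult
      algebra_simps)

lemma proj_pm_A2: "proj_pm ** A2 = - proj_pm"
  unfolding proj_pm_def
  by (simp add: matrix_ring_distribs A2_sq matrix_mul_assoc[symmetric] A2_A2_mult algebra_simps)

lemma proj_pm_sq: "proj_pm ** proj_pm = proj_pm + proj_pm + proj_pm + proj_pm"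
proof -
  have "proj_pm ** proj_pm = proj_pm ** mat 1 + proj_pm ** A1 - proj_pm ** A2 - (proj_pm ** A1) ** A2"
    unfolding proj_pm_def by (simp add: matrix_ring_distribs matrix_mul_assoc)
  also have "\<dots> = proj_pm + proj_pm + proj_pm + proj_pm" by (simp add: proj_pm_A1 proj_pm_A2)
  finally show ?thesis .
qed

lemma C_proj_pm: "C ** proj_pm = proj_mm ** C"
  unfolding proj_pm_def proj_mm_def
  by (simp add: matrix_ring_distribs matrix_mul_assoc[symmetric] C_A1_mult C_A2_mult C_A1 C_A2
      A2_A1_mult A1_A1_mult algebra_simps)

lemma C_proj_mm: "C ** proj_mm = proj_mp ** C"
  unfolding proj_mm_def proj_mp_def
  by (simp add: matrix_ring_distribs matrix_mul_assoc[symmetric] C_A1_mult C_A2_mult C_A1 C_A2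
      A2_A1_mult A1_A1_mult algebra_simps)

lemma eq_0_if_mult_C_eq_0: "M ** C = 0 \<Longrightarrow> M = 0"
  by (metis C_cube matrix_mul_assoc matrix_mul_rid times0_left)

text \<open>If \<open>proj_pm = 0\<close> then all three projections vanish, and their sums force
  \<open>A2 = 1\<close> and \<open>A1 A2 = 1\<close> (here \<open>2 \<noteq> 0\<close> in \<open>F\<^sub>5\<close> is used).\<close>

lemma proj_pm_ne_0: "proj_pm \<noteq> 0"
proof
  assume pm: "proj_pm = 0"
  then have mm: "proj_mm = 0"
    using C_proj_pm eq_0_if_mult_C_eq_0 by auto
  then have mp: "proj_mp = 0"
    using C_proj_mm eq_0_if_mult_C_eq_0 by auto
  have "(mat 1 - A2) + (mat 1 - A2) = proj_pm + proj_mm"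
    unfolding proj_pm_def proj_mm_def by (simp add: algebra_simps)
  then have "mat 1 - A2 = 0" using pm mm matrix_double_eq_0 by (metis add.right_neutral)
  moreover have "(mat 1 - A1 ** A2) + (mat 1 - A1 ** A2) = proj_pm + proj_mp"
    unfolding proj_pm_def proj_mp_def by (simp add: algebra_simps)
  then have "mat 1 - A1 ** A2 = 0" using pm mp matrix_double_eq_0 by (metis add.right_neutral)
  ultimately show False using A1_ne_1 by (metis matrix_mul_rid right_minus_eq)
qed

lemma eq_0_if_eq_neg: "(M::5^3^3) = - M \<Longrightarrow> M = 0"
  using matrix_double_eq_0 by (metis add.right_inverse add_uminus_conv_diff diff_minus_eq_add)

lemma proj_pm_C_proj_pm: "proj_pm ** (C ** proj_pm) = 0"
proof -
  have "proj_pm ** (C ** proj_pm) = proj_pm ** (A1 ** (C ** proj_pm))"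
    by (metis proj_pm_A1 matrix_mul_assoc)
  also have "\<dots> = - (proj_pm ** (C ** proj_pm))"
    by (simp add: A1_C_mult A2_proj_pm matrix_ring_distribs)
  finally show ?thesis by (rule eq_0_if_eq_neg)
qed

lemma proj_pm_C_C_proj_pm: "proj_pm ** (C ** (C ** proj_pm)) = 0"
proof -
  have "proj_pm ** (C ** (C ** proj_pm)) = proj_pm ** (A1 ** (C ** (C ** proj_pm)))"
    by (metis proj_pm_A1 matrix_mul_assoc)
  also have "\<dots> = - (proj_pm ** (C ** (C ** proj_pm)))"
    by (simp add: A1_C_mult A2_C_mult A1_proj_pm A2_proj_pm matrix_ring_distribs)
  finally show ?thesis by (rule eq_0_if_eq_neg)
qed

text \<open>For a nonzero column \<open>v\<close> of \<open>proj_pm\<close>, the vectors \<open>v, C v, C\<^sup>2 v\<close> are joint eigenvectors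
  with the three distinct nontrivial characters; pairing them with the rows of
  \<open>proj_pm, proj_pm C\<^sup>2, proj_pm C\<close> gives a diagonal matrix, so they form a basis.\<close>

theorem conjugate_to_std:
  "\<exists>g g'. g ** g' = mat 1 \<and> g' ** g = mat 1 \<and>
     A1 ** g = g ** std_A1 \<and> A2 ** g = g ** std_A2 \<and> C ** g = g ** std_C"
proof -
  obtain i j where ij: "proj_pm $ i $ j \<noteq> 0"
    using proj_pm_ne_0 by (metis vec_eq_iff zero_index)
  define V :: "3 \<Rightarrow> 5^3^3" where
    "V k = (if k = 1 then proj_pm else if k = 2 then C ** proj_pm else C ** (C ** proj_pm))" for k
  define W :: "3 \<Rightarrow> 5^3^3" where
    "W k = (if k = 1 then proj_pm else if k = 2 then proj_pm ** (C ** C) else proj_pm ** C)" for k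
  define g :: "5^3^3" where "g = (\<chi> r k. V k $ r $ j)"
  define gl :: "5^3^3" where "gl = (\<chi> k r. W k $ i $ r)"
  define d where "d = (proj_pm ** proj_pm) $ i $ j"
  have "d \<noteq> 0" unfolding d_def proj_pm_sq using ij F5_four_times_ne_0 by simp
  have glg: "gl ** g = mat d"
    unfolding gl_def g_def rows_mult_columns
    by (simp add: vec_eq_iff forall_3 mat_def V_def W_def d_def matrix_mul_assoc[symmetric]
        proj_pm_C_proj_pm proj_pm_C_C_proj_pm C_C_C_mult C_cube[unfolded matrix_mul_assoc[symmetric]])
  have "det gl * det g = d * d * d"
    using det_mul[of gl g] det_mat[of d, where 'n=3] by (simp add: glg power3_eq_cube)
  then have "det g \<noteq> 0" using F5_cube_ne_0[OF \<open>d \<noteq> 0\<close>] by auto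
  then obtain g' where g': "g ** g' = mat 1" "g' ** g = mat 1"
    using invertible_if_det_ne_0 invertible_def by blast
  have A1V: "A1 ** V k = (if k = 1 then V k else - V k)" for k
    using exhaust_3[of k] by (auto simp: V_def A1_proj_pm A2_proj_pm A1_C_mult A2_C_mult matrix_ring_distribs)
  have A2V: "A2 ** V k = (if k = 3 then V k else - V k)" for k
    using exhaust_3[of k]
    by (auto simp: V_def A1_proj_pm A2_proj_pm A1_C_mult A2_C_mult A2_A1_mult A2_A2_mult matrix_ring_distribs)
  have CV: "C ** V k = V (if k = 1 then 2 else if k = 2 then 3 else 1)" for k
    using exhaust_3[of k] by (auto simp: V_def C_C_C_mult)
  have "A1 ** g = g ** std_A1"
    unfolding g_def mult_columns A1V std_A1_def
    by (simp add: vec_eq_iff forall_3 matrix_matrix_mult_def sum_3 F5_five_eq_0)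
  moreover have "A2 ** g = g ** std_A2"
    unfolding g_def mult_columns A2V std_A2_def
    by (simp add: vec_eq_iff forall_3 matrix_matrix_mult_def sum_3 F5_five_eq_0)
  moreover have "C ** g = g ** std_C"
    unfolding g_def mult_columns CV std_C_def
    by (simp add: vec_eq_iff forall_3 matrix_matrix_mult_def sum_3 F5_five_eq_0)
  ultimately show ?thesis using g' by blast
qed

end

lemma involution_commuting_with_std_eq_neg_1:
  fixes Z :: "5^3^3"
  assumes "Z ** Z = mat 1" "Z \<noteq> mat 1"
    and "Z ** std_A1 = std_A1 ** Z" "Z ** std_A2 = std_A2 ** Z" "Z ** std_C = std_C ** Z"
  shows "Z = mat (- 1)"
proof -
  obtain a b c d e f g h i where Z: "Z = mat3 a b c d e f g h i" by (rule mat3_cases)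
  have e1: "(Z ** std_A1)$r$k = (std_A1 ** Z)$r$k" for r k using assms(3) by simp
  have e2: "(Z ** std_A2)$r$k = (std_A2 ** Z)$r$k" for r k using assms(4) by simp
  have e3: "(Z ** std_C)$r$k = (std_C ** Z)$r$k" for r k using assms(5) by simp
  note defs = Z std_A1_def std_A2_def std_C_def mat3_mult mat3_nth
  have "b = 0" "c = 0" "d = 0" "g = 0"
    using e1[of 1 2] e1[of 1 3] e1[of 2 1] e1[of 3 1] unfolding defs by (simp_all add: F5_times_4_eq_self_iff)
  moreover have "f = 0" "h = 0"
    using e2[of 2 3] e2[of 3 2] unfolding defs by (simp_all add: F5_times_4_eq_self_iff)
  moreover have "e = a" "i = e"
    using e3[of 2 1] e3[of 3 2] unfolding defs by simp_all
  ultimately have Za: "Z = mat a" by (simp add: Z mat_eq_mat3)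
  then have "a * a = 1" "a \<noteq> 1" using assms(1,2) mat_mult_mat[of a a] by (auto simp: mat_eq_mat3 mat3_eq_iff mat3_mult)
  then have "a = - 1" using F5_cases[of a] by auto
  then show ?thesis by (simp add: Za)
qed

lemma circulant_if_conj_std_C:
  fixes S :: "5^3^3"
  assumes "S ** std_C = std_C ** std_C ** S"
  obtains x y z where "S = mat3 x y z y z x z x y"
proof -
  obtain a b c d e f g h i where S: "S = mat3 a b c d e f g h i" by (rule mat3_cases)
  have q: "(S ** std_C)$r$k = (std_C ** std_C ** S)$r$k" for r k using assms by simp
  have "b = d" "c = e" "a = f" "e = g" "f = h" "d = i"
    using q[of 1 1] q[of 1 2] q[of 1 3] q[of 2 1] q[of 2 2] q[of 2 3]
    unfolding S std_C_def mat3_mult mat3_nth by simp_all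
  then have "S = mat3 a b c b c a c a b" unfolding S by simp
  then show ?thesis by (rule that)
qed

lemma circulant_involution_cases:
  fixes x y z :: 5
  assumes "mat3 x y z y z x z x y ** mat3 x y z y z x z x y = mat 1"
  shows "(x,y,z) \<in> {(0,0,1),(0,0,4),(0,1,0),(0,4,0),(1,0,0),(4,0,0),
                     (1,1,2),(1,2,1),(2,1,1),(3,4,4),(4,3,4),(4,4,3)}"
  using F5_cases[of x] F5_cases[of y] F5_cases[of z] assms
  unfolding mat3_mult mat_eq_mat3 mat3_eq_iff
  by (elim disjE; simp)

lemma std_S_unique:
  fixes S :: "5^3^3"
  assumes "S ** std_C = std_C ** std_C ** S" "S ** S = mat 1"
    and "(S ** std_A1) ** (S ** std_A1) ** (S ** std_A1) = mat 1"
    and "(S ** std_A2) ** (S ** std_A2) ** (S ** std_A2) ** (S ** std_A2) ** (S ** std_A2) = mat 1"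
  shows "S = std_S"
proof -
  obtain x y z where S: "S = mat3 x y z y z x z x y"
    using assms(1) by (rule circulant_if_conj_std_C)
  have "(x,y,z) \<in> {(0,0,1),(0,0,4),(0,1,0),(0,4,0),(1,0,0),(4,0,0),
                    (1,1,2),(1,2,1),(2,1,1),(3,4,4),(4,3,4),(4,4,3)}"
    using circulant_involution_cases assms(2) S by simp
  then show ?thesis using assms(3,4)
    unfolding S std_S_def std_A1_def std_A2_def mat_eq_mat3
    by (elim insertE emptyE; simp add: mat3_mult mat3_eq_iff)
qed

section \<open>The standard embedding of \<open>A\<^sub>5 \<times> C\<^sub>2\<close>\<close>

text \<open>The heart of the permutation module of \<open>S\<^sub>5\<close> over \<open>F\<^sub>5\<close>: the sum-zero vectors of
  \<open>F\<^sub>5\<^sup>5\<close> modulo the all-ones vector, which lies among them since \<open>5 = 0\<close>.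
  The classes of \<open>e\<^sub>k - e\<^sub>4\<close> for \<open>k = 1, 2, 3\<close> form a basis, and \<open>vertex k\<close> is the
  class of \<open>e\<^sub>k - e\<^sub>4\<close> in these coordinates; \<open>e\<^sub>5 - e\<^sub>4\<close> is minus the sum of the other three.\<close>

definition vertex :: "nat \<Rightarrow> 5^3" where
  "vertex k = (if k = 1 then vector [1,0,0] else if k = 2 then vector [0,1,0]
     else if k = 3 then vector [0,0,1] else if k = 5 then vector [-1,-1,-1] else 0)"

definition nat_of_3 :: "3 \<Rightarrow> nat" where "nat_of_3 k = (if k = 1 then 1 else if k = 2 then 2 else 3)"

definition heart_rep :: "(nat \<Rightarrow> nat) \<Rightarrow> 5^3^3" where
  "heart_rep p = (\<chi> r k. vertex (p (nat_of_3 k)) $ r - vertex (p 4) $ r)"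

lemma nat_of_3_simps [simp]: "nat_of_3 1 = 1" "nat_of_3 2 = 2" "nat_of_3 3 = 3"
  by (simp_all add: nat_of_3_def)

lemma nat_of_3_range: "nat_of_3 k \<in> {1,2,3}"
  using exhaust_3[of k] by auto

lemma vertex_simps: "vertex 1 = vector [1,0,0]" "vertex 2 = vector [0,1,0]" "vertex 3 = vector [0,0,1]"
  "vertex 4 = 0" "vertex 5 = vector [-1,-1,-1]" "vertex (Suc 0) = vector [1,0,0]"
  by (simp_all add: vertex_def)

lemma sum_vertex: "sum vertex {1..5} = 0"
proof -
  have "{1..5::nat} = {1,2,3,4,5}" by auto
  then show ?thesis by (simp add: vertex_def vec_eq_iff forall_3 vector_3)
qed

lemma sum_vertex_permutes:
  assumes "p permutes {1..5}"
  shows "sum (vertex \<circ> p) {1..5} = 0"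
proof -
  have "sum (vertex \<circ> p) {1..5} = sum vertex (p ` {1..5})"
    by (rule sum.reindex[symmetric]) (rule permutes_inj_on[OF assms])
  then show ?thesis by (simp only: permutes_image[OF assms] sum_vertex)
qed

lemma heart_rep_mult_vec:
  "heart_rep p *v x = (\<chi> r. (vertex (p 1) $ r - vertex (p 4) $ r) * x $ 1
     + (vertex (p 2) $ r - vertex (p 4) $ r) * x $ 2 + (vertex (p 3) $ r - vertex (p 4) $ r) * x $ 3)"
  by (simp add: heart_rep_def matrix_vector_mult_def sum_3)

lemma F5_mult_3: "(x::5) * 3 = - (x * 2)"
  using F5_cases[of x] by auto

lemma heart_rep_mult_vertex:
  assumes "p permutes {1..5}" "k \<in> {1..5}"
  shows "heart_rep p *v vertex k = vertex (p k) - vertex (p 4)"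
proof -
  have "sum (vertex \<circ> p) {1..5} = vertex (p 1) + vertex (p 2) + vertex (p 3) + vertex (p 4) + vertex (p 5)"
    by (simp add: numeral_eq_Suc)
  then have p5: "vertex (p 5) = - (vertex (p 1) + vertex (p 2) + vertex (p 3) + vertex (p 4))"
    using sum_vertex_permutes[OF assms(1)]
    by (simp only: eq_neg_iff_add_eq_0 add.commute[of "vertex (p 5)"])
  have five: "heart_rep p *v vertex 5 = vertex (p 5) - vertex (p 4)"
  proof -
    have "(heart_rep p *v vertex 5) $ r = (vertex (p 5) - vertex (p 4)) $ r" for r
    proof -
      define v1 v2 v3 v4 where "v1 = vertex (p 1) $ r" "v2 = vertex (p 2) $ r"
        "v3 = vertex (p 3) $ r" "v4 = vertex (p 4) $ r"
      have "(heart_rep p *v vertex 5) $ r = (v1 - v4) * (-1) + (v2 - v4) * (-1) + (v3 - v4) * (-1)"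
        by (simp add: heart_rep_mult_vec vertex_simps vector_3 v1_v2_v3_v4_def)
      also have "\<dots> = - (v1 + v2 + v3 + v4) - v4"
        by (simp add: algebra_simps F5_mult_3)
      also have "\<dots> = (vertex (p 5) - vertex (p 4)) $ r" by (simp add: p5 v1_v2_v3_v4_def)
      finally show ?thesis .
    qed
    then show ?thesis by (simp add: vec_eq_iff)
  qed
  have "k = 1 \<or> k = 2 \<or> k = 3 \<or> k = 4 \<or> k = 5" using assms(2) by auto
  then show ?thesis
    using five by (auto simp: heart_rep_mult_vec vertex_simps vec_eq_iff forall_3 vector_3)
qed

lemma column_heart_rep: "(\<chi> s. heart_rep q $ s $ k) = vertex (q (nat_of_3 k)) - vertex (q 4)"
  by (simp add: heart_rep_def vec_eq_iff)

lemma matrix_mult_nth: "((A::'a::semiring_1^3^3) ** B) $ r $ k = (A *v (\<chi> s. B $ s $ k)) $ r"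
  by (simp add: matrix_matrix_mult_def matrix_vector_mult_def)

lemma heart_rep_compose:
  assumes "p permutes {1..5}" "q permutes {1..5}"
  shows "heart_rep (p \<circ> q) = heart_rep p ** heart_rep q"
proof -
  have q_in: "q (nat_of_3 k) \<in> {1..5}" "q 4 \<in> {1..5}" for k
  proof -
    show "q (nat_of_3 k) \<in> {1..5}"
      using nat_of_3_range[of k] by (simp only: permutes_in_image[OF assms(2)]) auto
    show "q 4 \<in> {1..5}" by (simp only: permutes_in_image[OF assms(2)]) simp
  qed
  have "(heart_rep p ** heart_rep q) $ r $ k = heart_rep (p \<circ> q) $ r $ k" for r k
  proof -
    have "(heart_rep p ** heart_rep q) $ r $ k = (heart_rep p *v (vertex (q (nat_of_3 k)) - vertex (q 4))) $ r"
      by (simp only: matrix_mult_nth column_heart_rep)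
    also have "heart_rep p *v (vertex (q (nat_of_3 k)) - vertex (q 4))
        = heart_rep p *v vertex (q (nat_of_3 k)) - heart_rep p *v vertex (q 4)"
      by (rule matrix_vector_mult_diff_distrib)
    also have "\<dots> = (vertex (p (q (nat_of_3 k))) - vertex (p 4)) - (vertex (p (q 4)) - vertex (p 4))"
      by (simp only: heart_rep_mult_vertex[OF assms(1) q_in(1)] heart_rep_mult_vertex[OF assms(1) q_in(2)])
    also have "\<dots> = vertex ((p \<circ> q) (nat_of_3 k)) - vertex ((p \<circ> q) 4)" by simp
    also have "\<dots> = (\<chi> s. heart_rep (p \<circ> q) $ s $ k)" by (simp only: column_heart_rep)
    finally show ?thesis by simp
  qed
  then show ?thesis by (simp add: vec_eq_iff)
qed

lemma heart_rep_id: "heart_rep id = mat 1"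
  unfolding vec_eq_iff forall_3 by (simp add: heart_rep_def vertex_def mat_def vector_3)

lemma vertex_diff_eq_vertex:
  assumes "a \<in> {1..5}" "b \<in> {1..5}" "k \<in> {1,2,3}" "vertex a - vertex b = vertex k"
  shows "a = k \<and> b = 4"
proof -
  have "a = 1 \<or> a = 2 \<or> a = 3 \<or> a = 4 \<or> a = 5" "b = 1 \<or> b = 2 \<or> b = 3 \<or> b = 4 \<or> b = 5"
    "k = 1 \<or> k = 2 \<or> k = 3" using assms(1-3) by auto
  then show ?thesis using assms(4)
    by (elim disjE; simp add: vertex_def vec_eq_iff forall_3 vector_3)
qed

lemma vertex_diff_eq_neg_vertex:
  assumes "a \<in> {1..5}" "b \<in> {1..5}" "k \<in> {1,2,3}" "vertex a - vertex b = - vertex k"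
  shows "a = 4 \<and> b = k"
proof -
  have "a = 1 \<or> a = 2 \<or> a = 3 \<or> a = 4 \<or> a = 5" "b = 1 \<or> b = 2 \<or> b = 3 \<or> b = 4 \<or> b = 5"
    "k = 1 \<or> k = 2 \<or> k = 3" using assms(1-3) by auto
  then show ?thesis using assms(4)
    by (elim disjE; simp add: vertex_def vec_eq_iff forall_3 vector_3)
qed

lemma column_mat_1: "(\<chi> r. (mat 1 :: 5^3^3) $ r $ k) = vertex (nat_of_3 k)"
  using exhaust_3[of k] by (auto simp: vec_eq_iff forall_3 mat_def vertex_simps vector_3)

lemma column_mat_neg_1: "(\<chi> r. (mat (- 1) :: 5^3^3) $ r $ k) = - vertex (nat_of_3 k)"
  using exhaust_3[of k] by (auto simp: vec_eq_iff forall_3 mat_def vertex_simps vector_3)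

lemma heart_rep_eq_1_imp_id:
  assumes "p permutes {1..5}" "heart_rep p = mat 1"
  shows "p = id"
proof -
  have p_in: "p x \<in> {1..5}" if "x \<in> {1..5}" for x using permutes_in_image[OF assms(1)] that by auto
  have "p (nat_of_3 k) = nat_of_3 k \<and> p 4 = 4" for k
  proof (rule vertex_diff_eq_vertex)
    show "vertex (p (nat_of_3 k)) - vertex (p 4) = vertex (nat_of_3 k)"
      using column_heart_rep[of p k] column_mat_1[of k] by (simp add: assms(2))
  qed (use nat_of_3_range[of k] p_in in auto)
  then have fix4: "p 1 = 1" "p 2 = 2" "p 3 = 3" "p 4 = 4"
    using nat_of_3_simps by metis+
  have ne: "p 5 \<noteq> p j" if "j \<noteq> 5" for j
    using permutes_inj[OF assms(1)] that by (metis injD)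
  have "p 5 \<in> {1..5}" by (rule p_in) simp
  then have "p 5 = 1 \<or> p 5 = 2 \<or> p 5 = 3 \<or> p 5 = 4 \<or> p 5 = 5" by auto
  then have "p 5 = 5" using ne[of 1] ne[of 2] ne[of 3] ne[of 4] fix4 by auto
  show "p = id"
  proof
    fix x
    show "p x = id x"
    proof (cases "x \<in> {1..5}")
      case True
      then have "x = 1 \<or> x = 2 \<or> x = 3 \<or> x = 4 \<or> x = 5" by auto
      then show ?thesis using fix4 \<open>p 5 = 5\<close> by auto
    next
      case False
      then show ?thesis using permutes_not_in[OF assms(1)] by simp
    qed
  qed
qed

lemma heart_rep_ne_neg_1:
  assumes "p permutes {1..5}"
  shows "heart_rep p \<noteq> mat (- 1)"
proof
  assume neg: "heart_rep p = mat (- 1)"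
  have p_in: "p x \<in> {1..5}" if "x \<in> {1..5}" for x using permutes_in_image[OF assms(1)] that by auto
  have "p 4 = nat_of_3 k" for k
  proof -
    have "nat_of_3 k \<in> {1..5}" using nat_of_3_range[of k] by auto
    then have "p (nat_of_3 k) \<in> {1..5}" "p 4 \<in> {1..5}" using p_in by auto
    moreover have "vertex (p (nat_of_3 k)) - vertex (p 4) = - vertex (nat_of_3 k)"
      using column_heart_rep[of p k] column_mat_neg_1[of k] by (simp add: neg)
    ultimately show ?thesis using vertex_diff_eq_neg_vertex nat_of_3_range by blast
  qed
  from this[of 1] this[of 2] show False by simp
qed

definition gen_a1 :: "nat \<Rightarrow> nat" where "gen_a1 = Transposition.transpose 1 2 \<circ> Transposition.transpose 3 4"
definition gen_a2 :: "nat \<Rightarrow> nat" where "gen_a2 = Transposition.transpose 1 3 \<circ> Transposition.transpose 2 4"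
definition gen_c :: "nat \<Rightarrow> nat" where "gen_c = Transposition.transpose 1 2 \<circ> Transposition.transpose 2 3"
definition gen_s :: "nat \<Rightarrow> nat" where "gen_s = Transposition.transpose 1 2 \<circ> Transposition.transpose 4 5"

lemmas gen_defs = gen_a1_def gen_a2_def gen_c_def gen_s_def

lemma gens_in_alt5:
  "gen_a1 \<in> carrier (alt_group 5)" "gen_a2 \<in> carrier (alt_group 5)"
  "gen_c \<in> carrier (alt_group 5)" "gen_s \<in> carrier (alt_group 5)"
  by (simp_all add: gen_defs alt_group_carrier permutes_compose permutes_swap_id evenperm_comp
      permutation_swap_id evenperm_swap)

lemma nat_fun_eq_if_eq_on_1_to_5:
  assumes "f 1 = g 1" "f 2 = g 2" "f 3 = g 3" "f 4 = g 4" "f 5 = g 5"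
    and "\<And>x. x \<notin> {1,2,3,4,5} \<Longrightarrow> f x = (g x :: nat)"
  shows "f = g"
proof
  fix x
  show "f x = g x" using assms by (cases "x \<in> {1,2,3,4,5}") auto
qed

lemma gen_relations:
  "gen_a1 \<circ> gen_a1 = id" "gen_a2 \<circ> gen_a2 = id" "gen_a1 \<circ> gen_a2 = gen_a2 \<circ> gen_a1"
  "gen_c \<circ> gen_a1 = gen_a1 \<circ> gen_a2 \<circ> gen_c" "gen_c \<circ> gen_a2 = gen_a1 \<circ> gen_c"
  "gen_c \<circ> gen_c \<circ> gen_c = id" "gen_s \<circ> gen_s = id" "gen_s \<circ> gen_c = gen_c \<circ> gen_c \<circ> gen_s"
  "gen_s \<circ> gen_a1 \<circ> (gen_s \<circ> gen_a1) \<circ> (gen_s \<circ> gen_a1) = id"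
  "gen_s \<circ> gen_a2 \<circ> (gen_s \<circ> gen_a2) \<circ> (gen_s \<circ> gen_a2) \<circ> (gen_s \<circ> gen_a2) \<circ> (gen_s \<circ> gen_a2) = id"
  by (rule nat_fun_eq_if_eq_on_1_to_5; simp add: gen_defs Transposition.transpose_def)+

lemma klein_products:
  "gen_a1 \<circ> (gen_a1 \<circ> gen_a2) = gen_a2" "gen_a2 \<circ> (gen_a1 \<circ> gen_a2) = gen_a1"
  "gen_a1 \<circ> gen_a2 \<circ> gen_a1 = gen_a2" "gen_a1 \<circ> gen_a2 \<circ> gen_a2 = gen_a1"
  "gen_a1 \<circ> gen_a2 \<circ> (gen_a1 \<circ> gen_a2) = id"
  by (rule nat_fun_eq_if_eq_on_1_to_5; simp add: gen_defs Transposition.transpose_def)+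

lemma gens_distinct:
  "gen_a1 \<noteq> id" "gen_a2 \<noteq> id" "gen_a1 \<circ> gen_a2 \<noteq> id" "gen_c \<noteq> id" "gen_s \<circ> gen_a2 \<noteq> id"
  "gen_a1 \<noteq> gen_a2" "gen_a1 \<noteq> gen_a1 \<circ> gen_a2" "gen_a2 \<noteq> gen_a1 \<circ> gen_a2"
  by (auto dest!: fun_cong[of _ _ 1] simp: gen_defs Transposition.transpose_def)

lemma alt5_mult_closed:
  "x \<in> carrier (alt_group 5) \<Longrightarrow> y \<in> carrier (alt_group 5) \<Longrightarrow> x \<circ> y \<in> carrier (alt_group 5)"
  using group.subgroupE(4)[OF alt_group_is_group group.subgroup_self[OF alt_group_is_group]]
  by (simp add: alt_group_mult)

lemma id_in_alt5: "id \<in> carrier (alt_group 5)"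
  using group.is_monoid[OF alt_group_is_group] monoid.one_closed by (fastforce simp: alt_group_one)

lemma finite_alt5: "finite (carrier (alt_group 5))"
  by (rule finite_subset[of _ "{p. p permutes {1..(5::nat)}}"])
    (auto simp: alt_group_carrier finite_permutations)

lemma card_alt5: "card (carrier (alt_group 5)) = 60"
proof -
  have "2 * card (carrier (alt_group 5)) = fact 5" by (rule alt_group_card_carrier) simp
  moreover have "fact 5 = (120::nat)" by (simp add: numeral_eq_Suc)
  ultimately show ?thesis by simp
qed

text \<open>A subgroup containing the generators has order divisible by \<open>3\<close> (from \<open>gen_c\<close>),
  \<open>5\<close> (from \<open>gen_s \<circ> gen_a2\<close>) and \<open>4\<close> (from the Klein four-group), hence by \<open>60\<close>.\<close>

lemma alt5_generated_by_gens:
  assumes T: "subgroup T (alt_group 5)"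
    and gens: "gen_a1 \<in> T" "gen_a2 \<in> T" "gen_c \<in> T" "gen_s \<in> T"
  shows "T = carrier (alt_group 5)"
proof -
  interpret A5: group "alt_group 5" by (rule alt_group_is_group)
  have fin: "finite T" using finite_subset[OF subgroup.subset[OF T] finite_alt5] .
  have closed: "x \<circ> y \<in> T" if "x \<in> T" "y \<in> T" for x y
    using subgroup.m_closed[OF T that] by (simp add: alt_group_mult)
  have pow: "x [^]\<^bsub>alt_group 5\<^esub> (n::nat) = x ^^ n" for x n
    by (induction n) (simp_all add: alt_group_mult alt_group_one funpow_swap1 comp_def)
  have "gen_c ^^ 3 = id" using gen_relations(6) by (simp add: numeral_eq_Suc comp_assoc)
  then have "3 dvd card T"
    using A5.prime_dvd_card_subgroup[OF T fin _ gens(3), of 3] gens_distinct(4)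
    by (simp add: pow alt_group_one)
  moreover have "(gen_s \<circ> gen_a2) ^^ 5 = id" using gen_relations(10) by (simp add: numeral_eq_Suc comp_assoc)
  then have "5 dvd card T"
    using A5.prime_dvd_card_subgroup[OF T fin _ closed[OF gens(4,2)], of 5] gens_distinct(5)
    by (simp add: pow alt_group_one)
  moreover have "4 dvd card T"
  proof -
    define V where "V = {id, gen_a1, gen_a2, gen_a1 \<circ> gen_a2}"
    have "subgroup V (alt_group 5)"
    proof (rule A5.subgroupI)
      show "V \<subseteq> carrier (alt_group 5)"
        using gens_in_alt5 id_in_alt5 alt5_mult_closed by (auto simp: V_def)
      show "inv\<^bsub>alt_group 5\<^esub> a \<in> V" if "a \<in> V" for a
      proof -
        have "a \<circ> a = id" using that gen_relations(1,2) klein_products(5) by (auto simp: V_def)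
        then have "inv\<^bsub>alt_group 5\<^esub> a = a"
          using A5.inv_equality \<open>V \<subseteq> _\<close> that by (auto simp: alt_group_mult alt_group_one)
        then show ?thesis using that by simp
      qed
      show "a \<otimes>\<^bsub>alt_group 5\<^esub> b \<in> V" if "a \<in> V" "b \<in> V" for a b
        using that gen_relations(1,2,3) klein_products by (auto simp: V_def alt_group_mult)
    qed (simp add: V_def)
    moreover have "V \<subseteq> T"
      using gens closed subgroup.one_closed[OF T] by (auto simp: V_def alt_group_one)
    moreover have "card V = 4"
      using gens_distinct by (auto simp: V_def)
    ultimately show ?thesis using A5.card_subgroup_dvd_card_subgroup[OF _ T _ fin] by metis
  qed
  ultimately have "60 dvd card T" by presburger
  moreover have "card T dvd 60"
    using A5.card_subgroup_dvd_card_subgroup[OF T A5.subgroup_self subgroup.subset[OF T] finite_alt5]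
    by (simp add: card_alt5)
  ultimately have "card T = card (carrier (alt_group 5))" by (simp add: dvd_antisym card_alt5)
  then show ?thesis using card_subset_eq[OF finite_alt5 subgroup.subset[OF T]] by simp
qed

lemma heart_rep_gens:
  "heart_rep gen_a1 = mat3 0 1 0 1 0 0 4 4 4" "heart_rep gen_a2 = mat3 0 0 1 4 4 4 1 0 0"
  "heart_rep gen_c = mat3 0 0 1 1 0 0 0 1 0" "heart_rep gen_s = mat3 1 2 1 2 1 1 1 1 2"
  unfolding vec_eq_iff forall_3
  by (simp_all add: heart_rep_def gen_defs vertex_def Transposition.transpose_def vector_3)

text \<open>The columns of \<open>basis_change\<close> are joint eigenvectors of \<open>heart_rep gen_a1\<close> and
  \<open>heart_rep gen_a2\<close>, permuted cyclically by \<open>heart_rep gen_c\<close>.\<close>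

definition basis_change :: "5^3^3" where "basis_change = mat3 2 3 2 2 2 3 3 2 2"
definition basis_change_inv :: "5^3^3" where "basis_change_inv = mat3 4 4 0 0 4 4 4 0 4"

lemma basis_change_inverse:
  "basis_change ** basis_change_inv = mat 1" "basis_change_inv ** basis_change = mat 1"
  by (simp_all add: basis_change_def basis_change_inv_def mat3_mult mat_eq_mat3 mat3_eq_iff)

definition std_rep :: "(nat \<Rightarrow> nat) \<Rightarrow> 5^3^3" where
  "std_rep p = basis_change_inv ** heart_rep p ** basis_change"

lemma std_rep_gens:
  "std_rep gen_a1 = std_A1" "std_rep gen_a2 = std_A2" "std_rep gen_c = std_C" "std_rep gen_s = std_S"
  by (simp_all add: std_rep_def heart_rep_gens basis_change_def basis_change_inv_def std_A1_def
      std_A2_def std_C_def std_S_def mat3_mult mat3_eq_iff)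

lemma std_rep_compose:
  assumes "p permutes {1..5}" "q permutes {1..5}"
  shows "std_rep (p \<circ> q) = std_rep p ** std_rep q"
proof -
  have "std_rep p ** std_rep q
      = basis_change_inv ** heart_rep p ** (basis_change ** basis_change_inv) ** heart_rep q ** basis_change"
    by (simp add: std_rep_def matrix_mul_assoc)
  then show ?thesis
    by (simp add: basis_change_inverse std_rep_def heart_rep_compose[OF assms] matrix_mul_assoc)
qed

lemma std_rep_id: "std_rep id = mat 1"
  by (simp add: std_rep_def heart_rep_id basis_change_inverse)

lemma heart_rep_eq_conj_std_rep: "heart_rep p = basis_change ** std_rep p ** basis_change_inv"
proof -
  have "basis_change ** std_rep p ** basis_change_inv
      = (basis_change ** basis_change_inv) ** heart_rep p ** (basis_change ** basis_change_inv)"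
    by (simp add: std_rep_def matrix_mul_assoc)
  then show ?thesis by (simp add: basis_change_inverse)
qed

lemma GL3F5_carrier: "carrier GL3F5 = {A. invertible A}"
  by (simp add: GL3F5_def)

lemma GL3F5_mult [simp]: "x \<otimes>\<^bsub>GL3F5\<lparr>carrier := H\<rparr>\<^esub> y = x ** y" "x \<otimes>\<^bsub>GL3F5\<^esub> y = x ** y"
  by (simp_all add: GL3F5_def)

lemma GL3F5_one [simp]: "\<one>\<^bsub>GL3F5\<lparr>carrier := H\<rparr>\<^esub> = mat 1" "\<one>\<^bsub>GL3F5\<^esub> = mat 1"
  by (simp_all add: GL3F5_def)

lemma in_GL3F5_if_inverse: "g ** g' = mat 1 \<Longrightarrow> g' ** g = mat 1 \<Longrightarrow> g \<in> carrier GL3F5"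
  by (auto simp: GL3F5_carrier invertible_def)

lemma group_GL3F5: "group GL3F5"
proof (rule groupI)
  show "\<one>\<^bsub>GL3F5\<^esub> \<in> carrier GL3F5"
    by (rule in_GL3F5_if_inverse[of _ "mat 1"]) simp_all
  show "\<exists>y\<in>carrier GL3F5. y \<otimes>\<^bsub>GL3F5\<^esub> x = \<one>\<^bsub>GL3F5\<^esub>" if x: "x \<in> carrier GL3F5" for x
  proof -
    obtain y where "x ** y = mat 1" "y ** x = mat 1"
      using x by (auto simp: GL3F5_carrier invertible_def)
    then show ?thesis using in_GL3F5_if_inverse by auto
  qed
qed (auto simp: GL3F5_carrier invertible_mult matrix_mul_assoc intro: in_GL3F5_if_inverse)

lemma GL3F5_inv_eq:
  assumes "g ** g' = mat 1" "g' ** g = mat 1"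
  shows "inv\<^bsub>GL3F5\<^esub> g = g'"
  using group.inv_equality[OF group_GL3F5, of g' g] in_GL3F5_if_inverse assms by simp

lemma group_A5xC2: "group A5xC2"
  unfolding A5xC2_def by (rule DirProd_group[OF alt_group_is_group group_integer_mod_group])

lemma carrier_A5xC2: "carrier A5xC2 = carrier (alt_group 5) \<times> {0,1}"
  by (auto simp: A5xC2_def carrier_integer_mod_group)

lemma A5xC2_mult: "(x,k) \<otimes>\<^bsub>A5xC2\<^esub> (y,l) = (x \<circ> y, (k + l) mod 2)"
  by (simp add: A5xC2_def alt_group_mult)

lemma A5xC2_one: "\<one>\<^bsub>A5xC2\<^esub> = (id, 0)"
  by (simp add: A5xC2_def alt_group_one)

lemma alt5_permutes: "x \<in> carrier (alt_group 5) \<Longrightarrow> x permutes {1..5}"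
  by (simp add: alt_group_carrier)

definition std_embedding :: "(nat \<Rightarrow> nat) \<times> int \<Rightarrow> 5^3^3" where
  "std_embedding z = mat (if snd z = 0 then 1 else - 1) ** std_rep (fst z)"

lemma scalar_mult_scalar_mult:
  fixes M N :: "'a::comm_semiring_1^'n^'n"
  shows "(mat a ** M) ** (mat b ** N) = mat (a * b) ** (M ** N)"
proof -
  have "(mat a ** M) ** (mat b ** N) = mat a ** (M ** (mat b ** N))"
    by (simp only: matrix_mul_assoc)
  also have "\<dots> = mat a ** (mat b ** (M ** N))"
    by (simp only: matrix_mul_mat_left_commute[of M b N])
  also have "\<dots> = mat (a * b) ** (M ** N)"
    by (simp only: matrix_mul_assoc mat_mult_mat)
  finally show ?thesis .
qed

lemma std_embedding_mult:
  assumes "z \<in> carrier A5xC2" "w \<in> carrier A5xC2"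
  shows "std_embedding (z \<otimes>\<^bsub>A5xC2\<^esub> w) = std_embedding z ** std_embedding w"
proof -
  obtain x k y l where z: "z = (x,k)" and w: "w = (y,l)" by (cases z, cases w)
  then have xy: "x permutes {1..5}" "y permutes {1..5}" and kl: "k \<in> {0,1}" "l \<in> {0,1}"
    using assms alt5_permutes by (auto simp: carrier_A5xC2)
  have "(if (k + l) mod 2 = 0 then 1 else - 1) = (if k = 0 then 1 else - 1) * (if l = 0 then (1::5) else - 1)"
    using kl by auto
  then show ?thesis
    by (simp only: z w A5xC2_mult std_embedding_def std_rep_compose[OF xy] scalar_mult_scalar_mult
        fst_conv snd_conv)
qed

lemma std_embedding_in_GL3F5:
  assumes "z \<in> carrier A5xC2"
  shows "std_embedding z \<in> carrier GL3F5"
proof -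
  obtain x k where z: "z = (x,k)" by (cases z)
  then have x: "x permutes {1..5}" using assms alt5_permutes by (auto simp: carrier_A5xC2)
  have x': "inv_into UNIV x permutes {1..5}" by (rule permutes_inv[OF x])
  have "std_rep x ** std_rep (inv_into UNIV x) = mat 1" "std_rep (inv_into UNIV x) ** std_rep x = mat 1"
    using std_rep_compose[OF x x'] std_rep_compose[OF x' x] permutes_inv_o[OF x] std_rep_id by auto
  then have "invertible (std_rep x)" unfolding invertible_def by blast
  moreover have "invertible (mat (- 1) :: 5^3^3)"
    unfolding invertible_def by (rule exI[of _ "mat (- 1)"]) (simp add: mat_mult_mat)
  ultimately show ?thesis by (auto simp: GL3F5_carrier std_embedding_def z invertible_mult)
qed

lemma std_embedding_hom: "group_hom A5xC2 GL3F5 std_embedding"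
  unfolding group_hom_def group_hom_axioms_def
  by (auto simp: group_A5xC2 group_GL3F5 intro!: homI std_embedding_in_GL3F5 std_embedding_mult)

lemma kernel_std_embedding: "kernel A5xC2 GL3F5 std_embedding = {\<one>\<^bsub>A5xC2\<^esub>}"
proof -
  have "z = (id, 0)" if "z \<in> carrier A5xC2" "std_embedding z = mat 1" for z
  proof -
    obtain x k where z: "z = (x,k)" by (cases z)
    then have x: "x permutes {1..5}" and k: "k \<in> {0,1}"
      using that(1) alt5_permutes by (auto simp: carrier_A5xC2)
    define s :: 5 where "s = (if k = 0 then 1 else - 1)"
    have "mat s ** std_rep x = mat 1" using that(2) by (simp add: z std_embedding_def s_def)
    then have "mat s ** (mat s ** std_rep x) = mat s" by simp
    moreover have "s * s = 1" by (simp add: s_def)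
    ultimately have "std_rep x = mat s" by (simp add: matrix_mul_assoc mat_mult_mat)
    have "heart_rep x = basis_change ** (mat s ** basis_change_inv)"
      by (simp add: heart_rep_eq_conj_std_rep \<open>std_rep x = mat s\<close> matrix_mul_assoc)
    also have "\<dots> = mat s ** (basis_change ** basis_change_inv)"
      by (rule matrix_mul_mat_left_commute)
    finally have "heart_rep x = mat s" by (simp add: basis_change_inverse)
    then show ?thesis
      using heart_rep_eq_1_imp_id[OF x] heart_rep_ne_neg_1[OF x] k by (auto simp: z s_def split: if_splits)
  qed
  moreover have "std_embedding (id, 0) = mat 1" by (simp add: std_embedding_def std_rep_id)
  ultimately show ?thesis
    by (auto simp: kernel_def A5xC2_one carrier_A5xC2 id_in_alt5)
qed

lemma inj_on_std_embedding: "inj_on std_embedding (carrier A5xC2)"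
  using group_hom.trivial_ker_imp_inj[OF std_embedding_hom kernel_std_embedding] .

definition std_subgroup :: "(5^3^3) set" where "std_subgroup = std_embedding ` carrier A5xC2"

lemma subgroup_std_subgroup: "subgroup std_subgroup GL3F5"
  unfolding std_subgroup_def by (rule group_hom.img_is_subgroup[OF std_embedding_hom])

lemma std_subgroup_iso: "GL3F5\<lparr>carrier := std_subgroup\<rparr> \<cong> A5xC2"
proof -
  have "std_embedding \<in> iso A5xC2 (GL3F5\<lparr>carrier := std_subgroup\<rparr>)"
    unfolding iso_def bij_betw_def
    by (auto intro!: homI simp: std_subgroup_def std_embedding_mult inj_on_std_embedding)
  then show ?thesis by (rule group.iso_sym[OF group_A5xC2 is_isoI])
qed

section \<open>Uniqueness up to conjugation\<close>

lemma hom_A5xC2_restrict: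
  assumes "F \<in> hom A5xC2 H"
  shows "(\<lambda>x. F (x, 0)) \<in> hom (alt_group 5) H"
proof (rule homI)
  fix x y assume "x \<in> carrier (alt_group 5)" "y \<in> carrier (alt_group 5)"
  then show "F (x \<otimes>\<^bsub>alt_group 5\<^esub> y, 0) = F (x, 0) \<otimes>\<^bsub>H\<^esub> F (y, 0)"
    using hom_mult[OF assms, of "(x,0)" "(y,0)"] by (simp add: A5xC2_mult alt_group_mult carrier_A5xC2)
qed (use assms in \<open>auto intro: hom_in_carrier simp: carrier_A5xC2\<close>)

lemma A5xC2_hom_eqI:
  assumes H: "group H" and F: "F \<in> hom A5xC2 H" "F' \<in> hom A5xC2 H"
    and gens: "F (gen_a1, 0) = F' (gen_a1, 0)" "F (gen_a2, 0) = F' (gen_a2, 0)"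
      "F (gen_c, 0) = F' (gen_c, 0)" "F (gen_s, 0) = F' (gen_s, 0)"
    and central: "F (id, 1) = F' (id, 1)"
    and z: "z \<in> carrier A5xC2"
  shows "F z = F' z"
proof -
  let ?T = "{x \<in> carrier (alt_group 5). F (x, 0) = F' (x, 0)}"
  have "subgroup ?T (alt_group 5)"
    by (rule hom_equalizer_subgroup[OF alt_group_is_group H hom_A5xC2_restrict[OF F(1)]
          hom_A5xC2_restrict[OF F(2)]])
  then have "?T = carrier (alt_group 5)"
    by (rule alt5_generated_by_gens) (use gens gens_in_alt5 in auto)
  then have restrict: "F (x, 0) = F' (x, 0)" if "x \<in> carrier (alt_group 5)" for x
    using that by blast
  obtain x k where zxk: "z = (x, k)" by (cases z)
  have x: "x \<in> carrier (alt_group 5)" using z zxk by (auto simp: carrier_A5xC2)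
  have "k = 0 \<or> k = 1" using z zxk by (auto simp: carrier_A5xC2)
  then show ?thesis
  proof
    assume "k = 1"
    then have "z = (x, 0) \<otimes>\<^bsub>A5xC2\<^esub> (id, 1)" by (simp add: zxk A5xC2_mult)
    then show ?thesis
      using F[THEN hom_mult, of "(x, 0)" "(id, 1)"] x restrict central id_in_alt5
      by (simp add: carrier_A5xC2)
  qed (simp add: zxk restrict[OF x])
qed

lemma alt5_hom_GL3F5_mult:
  assumes "\<Phi> \<in> hom (alt_group 5) GL3F5" "x \<in> carrier (alt_group 5)" "y \<in> carrier (alt_group 5)"
  shows "\<Phi> (x \<circ> y) = \<Phi> x ** \<Phi> y"
  using hom_mult[OF assms] by (simp add: alt_group_mult)

lemma alt5_hom_GL3F5_id:
  assumes "\<Phi> \<in> hom (alt_group 5) GL3F5"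
  shows "\<Phi> id = mat 1"
  using hom_one[OF assms alt_group_is_group group_GL3F5] by (simp add: alt_group_one)

lemma klein_triple_hom_image:
  assumes \<Phi>: "\<Phi> \<in> hom (alt_group 5) GL3F5" and "\<Phi> gen_a1 \<noteq> mat 1"
  shows "klein_triple (\<Phi> gen_a1) (\<Phi> gen_a2) (\<Phi> gen_c)"
  unfolding klein_triple_def
  using assms(2) arg_cong[OF gen_relations(1), of \<Phi>] arg_cong[OF gen_relations(2), of \<Phi>]
    arg_cong[OF gen_relations(3), of \<Phi>] arg_cong[OF gen_relations(4), of \<Phi>]
    arg_cong[OF gen_relations(5), of \<Phi>] arg_cong[OF gen_relations(6), of \<Phi>]
  by (simp add: alt5_hom_GL3F5_mult[OF \<Phi>] alt5_hom_GL3F5_id[OF \<Phi>] gens_in_alt5 alt5_mult_closed)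

lemma hom_image_gen_s_relations:
  assumes \<Phi>: "\<Phi> \<in> hom (alt_group 5) GL3F5"
  defines "S \<equiv> \<Phi> gen_s"
  shows "S ** \<Phi> gen_c = \<Phi> gen_c ** \<Phi> gen_c ** S" "S ** S = mat 1"
    "(S ** \<Phi> gen_a1) ** (S ** \<Phi> gen_a1) ** (S ** \<Phi> gen_a1) = mat 1"
    "(S ** \<Phi> gen_a2) ** (S ** \<Phi> gen_a2) ** (S ** \<Phi> gen_a2) ** (S ** \<Phi> gen_a2) ** (S ** \<Phi> gen_a2)
       = mat 1"
  unfolding S_def
  using arg_cong[OF gen_relations(8), of \<Phi>] arg_cong[OF gen_relations(7), of \<Phi>]
    arg_cong[OF gen_relations(9), of \<Phi>] arg_cong[OF gen_relations(10), of \<Phi>]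
  by (simp_all add: alt5_hom_GL3F5_mult[OF \<Phi>] alt5_hom_GL3F5_id[OF \<Phi>] gens_in_alt5 alt5_mult_closed)

lemma std_embedding_values:
  "std_embedding (x, 0) = std_rep x" "std_embedding (id, 1) = mat (- 1)"
  by (simp_all add: std_embedding_def std_rep_id)

lemma normalised_hom_eq_std_embedding:
  assumes F: "F \<in> hom A5xC2 GL3F5" and inj: "inj_on F (carrier A5xC2)"
    and std: "F (gen_a1, 0) = std_A1" "F (gen_a2, 0) = std_A2" "F (gen_c, 0) = std_C"
    and z: "z \<in> carrier A5xC2"
  shows "F z = std_embedding z"
proof -
  have \<Phi>: "(\<lambda>x. F (x, 0)) \<in> hom (alt_group 5) GL3F5" by (rule hom_A5xC2_restrict[OF F])
  have S: "F (gen_s, 0) = std_S"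
    by (rule std_S_unique) (use hom_image_gen_s_relations[OF \<Phi>] std in simp_all)
  have mult: "F (u \<otimes>\<^bsub>A5xC2\<^esub> w) = F u ** F w" if "u \<in> carrier A5xC2" "w \<in> carrier A5xC2" for u w
    using hom_mult[OF F that] by simp
  have one: "F (id, 0) = mat 1"
    using hom_one[OF F group_A5xC2 group_GL3F5] by (simp add: A5xC2_one)
  have in_A5xC2: "(id, 1) \<in> carrier A5xC2" "(x, 0) \<in> carrier A5xC2" if "x \<in> carrier (alt_group 5)" for x
    using that id_in_alt5 by (auto simp: carrier_A5xC2)
  have "F (id, 1) = mat (- 1)"
  proof (rule involution_commuting_with_std_eq_neg_1)
    show "F (id, 1) ** F (id, 1) = mat 1"
      using mult[of "(id, 1)" "(id, 1)"] in_A5xC2 one id_in_alt5 by (simp add: A5xC2_mult)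
    show "F (id, 1) \<noteq> mat 1"
      using inj_onD[OF inj, of "(id, 1)" "(id, 0)"] in_A5xC2 one id_in_alt5 by auto
    have commute: "F (id, 1) ** F (x, 0) = F (x, 0) ** F (id, 1)" if "x \<in> carrier (alt_group 5)" for x
      using mult[of "(id, 1)" "(x, 0)"] mult[of "(x, 0)" "(id, 1)"] in_A5xC2 that id_in_alt5
      by (simp add: A5xC2_mult)
    show "F (id, 1) ** std_A1 = std_A1 ** F (id, 1)" "F (id, 1) ** std_A2 = std_A2 ** F (id, 1)"
      "F (id, 1) ** std_C = std_C ** F (id, 1)"
      using commute gens_in_alt5 std by metis+
  qed
  then show ?thesis
    using A5xC2_hom_eqI[OF group_GL3F5 F group_hom.homh[OF std_embedding_hom] _ _ _ _ _ z]
    by (simp add: std S std_embedding_values std_rep_gens)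
qed

lemma hom_A5xC2_conj_std_embedding:
  assumes F: "F \<in> hom A5xC2 GL3F5" and inj: "inj_on F (carrier A5xC2)"
  obtains g where "g \<in> carrier GL3F5"
    "\<And>z. z \<in> carrier A5xC2 \<Longrightarrow> F z = g \<otimes>\<^bsub>GL3F5\<^esub> std_embedding z \<otimes>\<^bsub>GL3F5\<^esub> inv\<^bsub>GL3F5\<^esub> g"
proof -
  have \<Phi>: "(\<lambda>x. F (x, 0)) \<in> hom (alt_group 5) GL3F5" by (rule hom_A5xC2_restrict[OF F])
  have "F (gen_a1, 0) \<noteq> mat 1"
    using inj_onD[OF inj, of "(gen_a1, 0)" "(id, 0)"] alt5_hom_GL3F5_id[OF \<Phi>] gens_distinct(1)
      gens_in_alt5 id_in_alt5 by (auto simp: carrier_A5xC2)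
  then interpret klein_triple "F (gen_a1, 0)" "F (gen_a2, 0)" "F (gen_c, 0)"
    using klein_triple_hom_image[OF \<Phi>] by simp
  obtain g g' where gg': "g ** g' = mat 1" "g' ** g = mat 1"
    and conj: "F (gen_a1, 0) ** g = g ** std_A1" "F (gen_a2, 0) ** g = g ** std_A2"
      "F (gen_c, 0) ** g = g ** std_C"
    using conjugate_to_std by blast
  have g: "g \<in> carrier GL3F5" and g': "inv\<^bsub>GL3F5\<^esub> g = g'"
    using in_GL3F5_if_inverse GL3F5_inv_eq gg' by auto
  define F' where "F' z = g' ** F z ** g" for z
  have F'_hom: "F' \<in> hom A5xC2 GL3F5"
    using hom_conjugate[OF group_GL3F5 F g] by (simp add: F'_def[abs_def] g')
  have F_eq: "F z = g ** F' z ** g'" for z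
  proof -
    have "g ** F' z ** g' = (g ** g') ** F z ** (g ** g')" by (simp add: F'_def matrix_mul_assoc)
    then show ?thesis by (simp add: gg')
  qed
  have "inj_on F' (carrier A5xC2)"
    using inj by (auto simp: inj_on_def F_eq)
  moreover have "F' (x, 0) = M" if "F (x, 0) ** g = g ** M" for x M
  proof -
    have "F' (x, 0) = g' ** (F (x, 0) ** g)" by (simp add: F'_def matrix_mul_assoc)
    also have "\<dots> = (g' ** g) ** M" by (simp add: that matrix_mul_assoc)
    finally show ?thesis by (simp add: gg')
  qed
  ultimately have "F' z = std_embedding z" if "z \<in> carrier A5xC2" for z
    using normalised_hom_eq_std_embedding[OF F'_hom _ _ _ _ that] conj by blast
  then show ?thesis
    using that g by (simp add: F_eq g')
qed

lemma subgroup_iso_A5xC2_conj_std_subgroup: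
  assumes H: "subgroup H GL3F5" and iso: "GL3F5\<lparr>carrier := H\<rparr> \<cong> A5xC2"
  shows "\<exists>g\<in>carrier GL3F5. H = conj_subset GL3F5 g std_subgroup"
proof -
  have "A5xC2 \<cong> GL3F5\<lparr>carrier := H\<rparr>"
    by (rule group.iso_sym[OF subgroup.subgroup_is_group[OF H group_GL3F5] iso])
  then obtain f where "f \<in> iso A5xC2 (GL3F5\<lparr>carrier := H\<rparr>)" unfolding is_iso_def by blast
  then have hom: "f \<in> hom A5xC2 (GL3F5\<lparr>carrier := H\<rparr>)" and bij: "bij_betw f (carrier A5xC2) H"
    by (auto simp: iso_def)
  have "f \<in> hom A5xC2 GL3F5"
    using hom subgroup.subset[OF H] by (auto simp: hom_def)
  then obtain g where g: "g \<in> carrier GL3F5"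
    and f: "\<And>z. z \<in> carrier A5xC2 \<Longrightarrow> f z = g \<otimes>\<^bsub>GL3F5\<^esub> std_embedding z \<otimes>\<^bsub>GL3F5\<^esub> inv\<^bsub>GL3F5\<^esub> g"
    using hom_A5xC2_conj_std_embedding bij by (metis bij_betw_def)
  have "H = f ` carrier A5xC2" using bij by (simp add: bij_betw_def)
  also have "\<dots> = conj_subset GL3F5 g std_subgroup"
    unfolding conj_subset_def std_subgroup_def image_image using f by (rule image_cong[OF refl])
  finally show ?thesis using g by blast
qed

theorem lemma3p17:
  shows "\<exists>H0. subgroup H0 GL3F5 \<and> GL3F5\<lparr>carrier := H0\<rparr> \<cong> A5xC2 \<and>
           (\<forall>H. subgroup H GL3F5 \<and> GL3F5\<lparr>carrier := H\<rparr> \<cong> A5xC2 \<longrightarrow>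
                (\<exists>g \<in> carrier GL3F5. H = conj_subset GL3F5 g H0))"
  using subgroup_std_subgroup std_subgroup_iso subgroup_iso_A5xC2_conj_std_subgroup by blast

end
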